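(* For every integer $m\ge 1$, the number of admissible sequences of length $m-1$ equals the Catalan number $C_m=\frac{1}{m+1}\binom{2m}{m}$.
   Context: A finite sequence of integers $\mathbf a=(a_1,\dots,a_n)$ is admissible if it is strictly increasing and $2i-1\le a_i\le 2n$ for all $1\le i\le n$ (the empty sequence, $n=0$, is admissible). *)

theory Defs
  imports Main
begin

text \<open>A finite integer sequence a = (a_1,...,a_n) is represented as a list xs of length n,
  with a_i = xs ! (i - 1).\<close>
definition admissible :: "int list \<Rightarrow> bool" where
  "admissible xs \<longleftrightarrow>
     sorted_wrt (<) xs \<and>
     (\<forall>i\<in>{1..length xs}. 2 * int i - 1 \<le> xs ! (i - 1) \<and> xs ! (i - 1) \<le> 2 * int (length xs))"

end

theory Submission
  imports Defs
begin

text \<open>Shifting to 0-based indices, an admissible sequence of length n is a strictly increasing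
  list whose i-th entry lies between 2i+1 and 2n. Counting such lists with entries bounded by t
  according to whether the last entry equals t gives a Pascal-type recurrence, solved by the
  ballot numbers (t choose k) - (t choose (k - 2)) of the reflection principle. At t = 2n, k = n this
  is (2n choose n) - (2n choose (n - 2)), which equals the Catalan number C(n+1).\<close>

text \<open>Entry xs ! i plays the role of a_(i+1); the lower bound 2i+1 is 2(i+1) - 1.\<close>
definition ballot_lists :: "nat \<Rightarrow> nat \<Rightarrow> int list set" where
  "ballot_lists t k = {xs. length xs = k \<and> sorted_wrt (<) xs \<and>
     (\<forall>i<k. 2 * int i + 1 \<le> xs ! i) \<and> (\<forall>x\<in>set xs. x \<le> int t)}"

lemma ballot_lists_0: "ballot_lists t 0 = {[]}"
  by (auto simp: ballot_lists_def)

lemma ballot_lists_eq_empty: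
  assumes "t + 1 < 2 * k"
  shows "ballot_lists t k = {}"
proof -
  obtain j where k: "k = Suc j" using assms by (cases k) auto
  have "2 * int j + 1 \<le> xs ! j" "xs ! j \<le> int t" if "xs \<in> ballot_lists t k" for xs
    using that by (auto simp: ballot_lists_def k)
  then show ?thesis using assms k by fastforce
qed

lemma finite_ballot_lists: "finite (ballot_lists t k)"
proof (rule finite_subset)
  show "ballot_lists t k \<subseteq> {xs. set xs \<subseteq> {0..int t} \<and> length xs = k}"
    by (fastforce simp: ballot_lists_def in_set_conv_nth)
  show "finite {xs. set xs \<subseteq> {0..int t} \<and> length xs = k}"
    by (rule finite_lists_length_eq) simp
qed

lemma snoc_mem_ballot_lists:
  "ys @ [y] \<in> ballot_lists t (Suc k) \<longleftrightarrow>
     ys \<in> ballot_lists t k \<and> (\<forall>x\<in>set ys. x < y) \<and> 2 * int k + 1 \<le> y \<and> y \<le> int t"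
  unfolding ballot_lists_def
  by (auto simp: sorted_wrt_append nth_append less_Suc_eq)

lemma ballot_lists_mono: "xs \<in> ballot_lists t k \<Longrightarrow> t \<le> t' \<Longrightarrow> xs \<in> ballot_lists t' k"
  by (auto simp: ballot_lists_def)

lemma ballot_lists_restrict:
  "xs \<in> ballot_lists t' k \<Longrightarrow> \<forall>x\<in>set xs. x \<le> int t \<Longrightarrow> xs \<in> ballot_lists t k"
  by (simp add: ballot_lists_def)

lemma ballot_lists_Suc_Suc:
  "ballot_lists (Suc t) (Suc k) = ballot_lists t (Suc k) \<union>
     (if 2 * k \<le> t then (\<lambda>ys. ys @ [int (Suc t)]) ` ballot_lists t k else {})"
proof (intro equalityI subsetI)
  fix xs assume xs: "xs \<in> ballot_lists (Suc t) (Suc k)"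
  then obtain ys y where ys: "xs = ys @ [y]"
    by (cases xs rule: rev_exhaust) (auto simp: ballot_lists_def)
  have y: "2 * int k + 1 \<le> y" "y \<le> int (Suc t)" and below: "\<forall>x\<in>set ys. x < y"
    and ys_Suc: "ys \<in> ballot_lists (Suc t) k"
    using xs unfolding ys snoc_mem_ballot_lists by auto
  have "\<forall>x\<in>set ys. x \<le> int t" using below y(2) by fastforce
  with ys_Suc have "ys \<in> ballot_lists t k" by (rule ballot_lists_restrict)
  show "xs \<in> ballot_lists t (Suc k) \<union>
     (if 2 * k \<le> t then (\<lambda>ys. ys @ [int (Suc t)]) ` ballot_lists t k else {})"
  proof (cases "y \<le> int t")
    case True
    then have "xs \<in> ballot_lists t (Suc k)"
      using y below \<open>ys \<in> ballot_lists t k\<close> unfolding ys snoc_mem_ballot_lists by simp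
    then show ?thesis by simp
  next
    case False
    then have "y = int (Suc t)" "2 * k \<le> t" using y by auto
    then show ?thesis using \<open>ys \<in> ballot_lists t k\<close> by (simp add: ys)
  qed
next
  fix xs assume "xs \<in> ballot_lists t (Suc k) \<union>
     (if 2 * k \<le> t then (\<lambda>ys. ys @ [int (Suc t)]) ` ballot_lists t k else {})"
  then consider "xs \<in> ballot_lists t (Suc k)"
    | ys where "2 * k \<le> t" "ys \<in> ballot_lists t k" "xs = ys @ [int (Suc t)]"
    by (auto split: if_splits)
  then show "xs \<in> ballot_lists (Suc t) (Suc k)"
  proof cases
    case 1
    then show ?thesis by (rule ballot_lists_mono) simp
  next
    case 2
    have "ys \<in> ballot_lists (Suc t) k" using 2(2) by (rule ballot_lists_mono) simp
    moreover have "\<forall>x\<in>set ys. x < int (Suc t)"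
      using 2(2) by (auto simp: ballot_lists_def)
    ultimately have "ys @ [int (Suc t)] \<in> ballot_lists (Suc t) (Suc k)"
      using 2(1) unfolding snoc_mem_ballot_lists by simp
    then show ?thesis using 2(3) by simp
  qed
qed

lemma card_ballot_lists_Suc_Suc:
  "card (ballot_lists (Suc t) (Suc k)) =
     card (ballot_lists t (Suc k)) + (if 2 * k \<le> t then card (ballot_lists t k) else 0)"
proof -
  have "ballot_lists t (Suc k) \<inter> (\<lambda>ys. ys @ [int (Suc t)]) ` ballot_lists t k = {}"
    by (auto simp: ballot_lists_def)
  moreover have "card ((\<lambda>ys. ys @ [int (Suc t)]) ` ballot_lists t k) = card (ballot_lists t k)"
    by (rule card_image) (simp add: inj_on_def)
  ultimately show ?thesis
    by (simp add: ballot_lists_Suc_Suc finite_ballot_lists card_Un_disjoint)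
qed

definition reflected_count :: "nat \<Rightarrow> nat \<Rightarrow> nat" where
  "reflected_count t k = (if 2 \<le> k then t choose (k - 2) else 0)"

lemma reflected_count_Suc_Suc:
  "reflected_count (Suc t) (Suc k) = reflected_count t (Suc k) + reflected_count t k"
  by (cases k; cases "k - 1") (auto simp: reflected_count_def)

lemma reflected_count_double_Suc: "reflected_count (2 * k) (Suc k) = (2 * k) choose (Suc k)"
proof (cases k)
  case (Suc j)
  then show ?thesis
    using binomial_symmetric[of "Suc k" "2 * k"] by (simp add: reflected_count_def)
qed (simp add: reflected_count_def)

lemma card_ballot_lists:
  "2 * k \<le> t + 1 \<Longrightarrow> card (ballot_lists t k) + reflected_count t k = t choose k"
proof (induction t arbitrary: k)
  case 0
  then have "k = 0" by simp
  then show ?case by (simp add: ballot_lists_0 reflected_count_def)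
next
  case (Suc t)
  show ?case
  proof (cases k)
    case 0
    then show ?thesis by (simp add: ballot_lists_0 reflected_count_def)
  next
    case (Suc k')
    have IH: "card (ballot_lists t k') + reflected_count t k' = t choose k'"
      using Suc.IH Suc.prems Suc by simp
    consider "2 * Suc k' \<le> t + 1" | "t = 2 * k'"
      using Suc.prems Suc by (cases "2 * Suc k' \<le> t + 1") auto
    then have "card (ballot_lists t (Suc k')) + reflected_count t (Suc k') = t choose Suc k'"
    proof cases
      case 1
      then show ?thesis by (rule Suc.IH)
    next
      case 2
      then show ?thesis by (simp add: ballot_lists_eq_empty reflected_count_double_Suc)
    qed
    moreover have "2 * k' \<le> t" using Suc.prems Suc by simp
    ultimately show ?thesis
      using IH by (simp add: Suc card_ballot_lists_Suc_Suc reflected_count_Suc_Suc)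
  qed
qed

lemma ball_atLeastAtMost_1_conv_Suc: "(\<forall>i\<in>{1..n}. P i) \<longleftrightarrow> (\<forall>i<n. P (Suc i))"
proof
  assume "\<forall>i\<in>{1..n}. P i"
  then show "\<forall>i<n. P (Suc i)" by simp
next
  assume *: "\<forall>i<n. P (Suc i)"
  show "\<forall>i\<in>{1..n}. P i"
  proof
    fix i assume "i \<in> {1..n}"
    then obtain j where "i = Suc j" "j < n" by (cases i) auto
    then show "P i" using * by simp
  qed
qed

lemma admissible_iff_ballot_lists:
  "length xs = n \<and> admissible xs \<longleftrightarrow> xs \<in> ballot_lists (2 * n) n"
  unfolding admissible_def ballot_lists_def ball_atLeastAtMost_1_conv_Suc all_set_conv_all_nth
  by auto

lemma Suc_Suc_times_binomial_add:
  "Suc a * Suc (Suc a) * ((a + b + 2) choose (a + 2)) =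
     Suc b * Suc (Suc b) * ((a + b + 2) choose a)"
proof -
  have "Suc (Suc a) * ((a + b + 2) choose (a + 2)) = Suc b * ((a + b + 2) choose Suc a)"
    using Suc_times_binomial_add[of "Suc a" b] by simp
  moreover have "Suc a * ((a + b + 2) choose Suc a) = Suc (Suc b) * ((a + b + 2) choose a)"
    using Suc_times_binomial_add[of a "Suc b"] by simp
  ultimately show ?thesis by (metis mult.assoc mult.left_commute)
qed

lemma Suc_times_central_binomial_Suc:
  "Suc n * ((2 * n + 2) choose Suc n) = 2 * (2 * n + 1) * ((2 * n) choose n)"
proof -
  have "Suc n * ((2 * n + 2) choose Suc n) = (2 * n + 2) * ((2 * n + 1) choose n)"
    using Suc_times_binomial[of n "2 * n + 1"] by simp
  also have "(2 * n + 1) choose n = (2 * n + 1) choose Suc n"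
    using binomial_symmetric[of n "2 * n + 1"] by simp
  also have "(2 * n + 2) * \<dots> = 2 * (((2 * n + 1) choose Suc n) * Suc n)"
    by (simp add: algebra_simps del: binomial_Suc_Suc)
  also have "((2 * n + 1) choose Suc n) * Suc n = (2 * n + 1) * ((2 * n) choose n)"
    using Suc_times_binomial_eq[of "2 * n" n] by simp
  finally show ?thesis by simp
qed

lemma reflected_count_central:
  "(n + 1) * (n + 2) * reflected_count (2 * n) n = n * (n - 1) * ((2 * n) choose n)"
proof (cases "n \<ge> 2")
  case True
  then have "n - 2 + n + 2 = 2 * n" "n - 2 + 2 = n" "Suc (n - 2) = n - 1" "Suc (Suc (n - 2)) = n"
    by arith+
  then have "(n - 1) * n * ((2 * n) choose n) = Suc n * Suc (Suc n) * ((2 * n) choose (n - 2))"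
    using Suc_Suc_times_binomial_add[of "n - 2" n] by (simp only:)
  then show ?thesis using True by (simp add: reflected_count_def ac_simps)
next
  case False
  then show ?thesis by (auto simp: reflected_count_def numeral_2_eq_2 less_Suc_eq)
qed

lemma card_ballot_lists_central:
  "(n + 2) * card (ballot_lists (2 * n) n) = (2 * n + 2) choose (n + 1)"
proof -
  let ?c = "card (ballot_lists (2 * n) n)" and ?C = "(2 * n) choose n"
  have "(n + 1) * ((n + 2) * ?c) + n * (n - 1) * ?C = (n + 1) * (n + 2) * ?C"
    using card_ballot_lists[of n "2 * n"] reflected_count_central[of n]
    by (metis add_mult_distrib2 mult.assoc le_add1)
  also have "\<dots> = (2 * (2 * n + 1) + n * (n - 1)) * ?C"
    by (cases n) (simp_all add: algebra_simps)
  also have "\<dots> = (n + 1) * ((2 * n + 2) choose (n + 1)) + n * (n - 1) * ?C"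
    using Suc_times_central_binomial_Suc[of n] by (simp add: algebra_simps)
  finally have "(n + 1) * ((n + 2) * ?c) = (n + 1) * ((2 * n + 2) choose (n + 1))"
    by (rule add_right_imp_eq)
  then show ?thesis unfolding mult_cancel1 by simp
qed

theorem mainTheorem6:
  fixes m :: nat
  assumes "m \<ge> 1"
  shows "card {xs :: int list. length xs = m - 1 \<and> admissible xs} = ((2 * m) choose m) div (m + 1)"
proof -
  obtain n where m: "m = n + 1" using assms by (metis add.commute le_Suc_ex)
  have "{xs. length xs = m - 1 \<and> admissible xs} = ballot_lists (2 * n) n"
    using admissible_iff_ballot_lists by (auto simp: m)
  moreover have "(2 * m) choose m = (m + 1) * card (ballot_lists (2 * n) n)"
    using card_ballot_lists_central[of n] by (simp add: m)
  ultimately show ?thesis by (metis nonzero_mult_div_cancel_left add_gr_0 zero_less_one less_numeral_extra(3))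
qed

end
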